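(* Consider the fixed-volume $\alpha$-cap process described in the context, and assume the thresholds preserve volume, i.e. $|A_t|=\alpha$ for all $t\ge1$. If $A_1\subseteq B(0,R/4)$ for some $R>0$, then $A_t\subseteq B(0,R)$ for all $t\ge1$.
   Context: $B(0,r)$ is the open Euclidean ball, $|\cdot|$ Lebesgue measure. Kernel assumptions: $g:\mathbb{R}^d\to[0,1]$, $g(x)=\tilde g(\|x\|)$; $g(0)=1$, $g>0$; $g$ is $L$-Lipschitz with continuous first and second derivatives; $\tilde g'(r)<0$ for $r>0$. Fixed-volume $\alpha$-cap process: $A_0\subset\mathbb{R}^d$ compact with $|A_0|=\alpha>0$; for $t\ge1$, $f_t(x)=\int\mathbbm{1}_{A_{t-1}}(y)g(x-y)\,dy$, $C_t=\inf\{C\ge0:|\{x:f_t(x)\ge C\}|<\alpha\}$, $A_t=\{x:f_t(x)\ge C_t\}$. *)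

theory Defs
  imports "HOL-Analysis.Analysis"
begin

definition kernel_ok :: "real \<Rightarrow> ('a::euclidean_space \<Rightarrow> real) \<Rightarrow> bool" where
  "kernel_ok L g \<longleftrightarrow>
     (\<forall>x. 0 \<le> g x \<and> g x \<le> 1) \<and>
     (\<exists>gt :: real \<Rightarrow> real.
        (\<forall>x. g x = gt (norm x)) \<and>
        (\<forall>r>0. \<exists>D. (gt has_real_derivative D) (at r) \<and> D < 0)) \<and>
     g 0 = 1 \<and> (\<forall>x. g x > 0) \<and>
     L-lipschitz_on UNIV g \<and>
     (\<exists>(g' :: 'a \<Rightarrow> 'a \<Rightarrow>\<^sub>L real) (g'' :: 'a \<Rightarrow> 'a \<Rightarrow>\<^sub>L ('a \<Rightarrow>\<^sub>L real)).
        (\<forall>x. (g has_derivative blinfun_apply (g' x)) (at x)) \<and>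
        (\<forall>x. (g' has_derivative blinfun_apply (g'' x)) (at x)) \<and>
        continuous_on UNIV g' \<and> continuous_on UNIV g'')"

definition cap_field :: "('a::euclidean_space \<Rightarrow> real) \<Rightarrow> 'a set \<Rightarrow> 'a \<Rightarrow> real" where
  "cap_field g A x = (\<integral>y. indicator A y * g (x - y) \<partial>lebesgue)"

definition cap_threshold :: "('a::euclidean_space \<Rightarrow> real) \<Rightarrow> real \<Rightarrow> 'a set \<Rightarrow> real" where
  "cap_threshold g \<alpha> A =
     Inf {C. C \<ge> 0 \<and> emeasure lebesgue {x. cap_field g A x \<ge> C} < ennreal \<alpha>}"

definition cap_step :: "('a::euclidean_space \<Rightarrow> real) \<Rightarrow> real \<Rightarrow> 'a set \<Rightarrow> 'a set" where
  "cap_step g \<alpha> A = {x. cap_field g A x \<ge> cap_threshold g \<alpha> A}"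

definition cap_seq :: "('a::euclidean_space \<Rightarrow> real) \<Rightarrow> real \<Rightarrow> 'a set \<Rightarrow> nat \<Rightarrow> 'a set" where
  "cap_seq g \<alpha> A0 t = (cap_step g \<alpha> ^^ t) A0"

end

theory Submission
  imports Defs
begin

(* Moving planes.  Call A dominated across the hyperplane H = {y. y \<bullet> u = c} if the
   reflection in H maps every point of A beyond H (on the side away from the origin) back
   into A.  Reflections preserve Lebesgue measure and the kernel is radially nonincreasing,
   so the field of a dominated set is at least as large at the mirror image of a point
   beyond H as at the point itself; hence every superlevel set of the field, in particular
   the next cap, is dominated across H again.  A_1 \<subseteq> B(0, R/4) is trivially dominated across
   every hyperplane at distance \<ge> R/4 from the origin, and by induction so is every A_t.
   If A_t contained a point w with |w| \<ge> R, then reflecting w in the perpendicular bisector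
   of w and z, for each z \<in> B(0, R/2), would put all of B(0, R/2) into A_t, contradicting
   |A_t| = |A_1| \<le> |B(0, R/4)|. *)

definition hyperplane_reflect :: "'a::real_inner \<Rightarrow> real \<Rightarrow> 'a \<Rightarrow> 'a" where
  "hyperplane_reflect u c y = y - (2 * (y \<bullet> u - c)) *\<^sub>R u"

context
  fixes u :: "'a::real_inner" and c :: real
  assumes unit: "norm u = 1"
begin

private lemma inner_unit_self: "u \<bullet> u = 1"
  using unit by (simp add: dot_square_norm)

lemma inner_hyperplane_reflect: "hyperplane_reflect u c y \<bullet> u = 2 * c - y \<bullet> u"
  by (simp add: hyperplane_reflect_def inner_unit_self algebra_simps)

lemma hyperplane_reflect_involution [simp]:
  "hyperplane_reflect u c (hyperplane_reflect u c y) = y"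
  by (simp add: hyperplane_reflect_def inner_unit_self algebra_simps)

lemma norm_hyperplane_reflect_diff_sq:
  "(norm (hyperplane_reflect u c w - y))\<^sup>2 = (norm (w - y))\<^sup>2 + 4 * (w \<bullet> u - c) * (y \<bullet> u - c)"
  by (simp add: hyperplane_reflect_def power2_norm_eq_inner inner_unit_self
      algebra_simps inner_commute)

lemma dist_hyperplane_reflect:
  "dist (hyperplane_reflect u c x) (hyperplane_reflect u c y) = dist x y"
proof -
  have "(norm (hyperplane_reflect u c x - hyperplane_reflect u c y))\<^sup>2 = (norm (x - y))\<^sup>2"
    by (simp add: hyperplane_reflect_def power2_norm_eq_inner inner_unit_self
        algebra_simps inner_commute)
  then show ?thesis
    by (simp add: dist_norm)
qed

lemma surj_hyperplane_reflect: "surj (hyperplane_reflect u c)"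
  by (metis hyperplane_reflect_involution surj_def)

end

lemma emeasure_lebesgue_disjoint_balls_null:
  fixes a :: "'i \<Rightarrow> 'a::euclidean_space"
  assumes "countable C" and "disjoint_family_on (\<lambda>i. ball (a i) (r i)) C"
    and "N \<in> null_sets lebesgue"
  shows "emeasure lebesgue ((\<Union>i\<in>C. ball (a i) (r i)) \<union> N)
    = (\<integral>\<^sup>+i. emeasure lebesgue (ball (a i) (r i)) \<partial>count_space C)"
proof -
  have "emeasure lebesgue ((\<Union>i\<in>C. ball (a i) (r i)) \<union> N)
      = emeasure lebesgue (\<Union>i\<in>C. ball (a i) (r i))"
  proof (rule emeasure_Un_null_set)
    have "open (\<Union>i\<in>C. ball (a i) (r i))"
      by auto
    then show "(\<Union>i\<in>C. ball (a i) (r i)) \<in> sets lebesgue"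
      by simp
  qed (use assms(3) in simp)
  also have "\<dots> = (\<integral>\<^sup>+i. emeasure lebesgue (ball (a i) (r i)) \<partial>count_space C)"
    using assms(1,2) by (intro emeasure_UN_countable) auto
  finally show ?thesis .
qed

context
  fixes T :: "'a::euclidean_space \<Rightarrow> 'a"
  assumes isometry: "\<And>x y. dist (T x) (T y) = dist x y" and surj: "surj T"
begin

lemma isometry_image_ball: "T ` ball x r = ball (T x) r"
proof
  show "T ` ball x r \<subseteq> ball (T x) r"
    by (auto simp: isometry)
  show "ball (T x) r \<subseteq> T ` ball x r"
  proof
    fix z assume "z \<in> ball (T x) r"
    moreover obtain y where "z = T y"
      using surj by (metis surjD)
    ultimately show "z \<in> T ` ball x r"
      by (simp add: isometry)
  qed
qed

lemma inj_isometry: "inj T"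
  by (rule injI) (metis isometry dist_eq_0_iff)

lemma continuous_on_isometry: "continuous_on UNIV T"
  by (rule lipschitz_on_continuous_on[of 1]) (simp add: lipschitz_on_def isometry)

lemma borel_measurable_isometry: "T \<in> borel_measurable borel"
  by (rule borel_measurable_continuous_onI[OF continuous_on_isometry])

lemma negligible_isometry_image: "negligible N \<Longrightarrow> negligible (T ` N)"
proof (rule negligible_locally_Lipschitz_image)
  show "\<exists>U B. open U \<and> x \<in> U \<and> (\<forall>y \<in> N \<inter> U. norm (T y - T x) \<le> B * norm (y - x))" for x
    by (rule exI[of _ UNIV], rule exI[of _ 1]) (simp add: dist_norm[symmetric] isometry)
qed auto

text \<open>An open set is, up to a null set, a countable disjoint union of balls (Vitali), and
  \<open>T\<close> maps such a decomposition to one with the same radii.\<close>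
lemma emeasure_isometry_image_open:
  assumes "open U"
  shows "emeasure lebesgue (T ` U) = emeasure lebesgue U"
proof -
  define K where "K = {(x, r). 0 < r \<and> ball x r \<subseteq> U}"
  have "\<exists>i. i \<in> K \<and> x \<in> ball (fst i) (snd i) \<and> snd i < d" if "x \<in> U" "0 < d" for x d
  proof -
    obtain e where "e > 0" "ball x e \<subseteq> U"
      using openE[OF \<open>open U\<close> \<open>x \<in> U\<close>] .
    then show ?thesis
      using that by (intro exI[of _ "(x, min e (d/2))"]) (auto simp: K_def)
  qed
  then obtain C where C: "countable C" "C \<subseteq> K"
    and pairwise: "pairwise (\<lambda>i j. disjnt (ball (fst i) (snd i)) (ball (fst j) (snd j))) C"
    and negligible: "negligible (U - (\<Union>i\<in>C. ball (fst i) (snd i)))"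
    by (rule Vitali_covering_theorem_balls[of U K fst snd])
  define N where "N = U - (\<Union>i\<in>C. ball (fst i) (snd i))"
  have U_eq: "U = (\<Union>i\<in>C. ball (fst i) (snd i)) \<union> N"
    using C(2) by (force simp: N_def K_def)
  have disjoint: "disjoint_family_on (\<lambda>i. ball (fst i) (snd i)) C"
    using pairwise by (auto simp: disjoint_family_on_def pairwise_def disjnt_def)
  have disjoint_image: "disjoint_family_on (\<lambda>i. ball (T (fst i)) (snd i)) C"
    using disjoint inj_isometry
    by (auto simp: disjoint_family_on_def isometry_image_ball[symmetric] image_Int[symmetric])
  have null: "N \<in> null_sets lebesgue" "T ` N \<in> null_sets lebesgue"
    using negligible negligible_isometry_image by (simp_all add: N_def negligible_iff_null_sets)
  have "T ` U = (\<Union>i\<in>C. ball (T (fst i)) (snd i)) \<union> T ` N"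
    by (subst U_eq) (simp add: image_Un image_UN isometry_image_ball)
  then have "emeasure lebesgue (T ` U)
      = (\<integral>\<^sup>+i. emeasure lebesgue (ball (T (fst i)) (snd i)) \<partial>count_space C)"
    using emeasure_lebesgue_disjoint_balls_null[OF C(1) disjoint_image null(2)] by simp
  also have "\<dots> = (\<integral>\<^sup>+i. emeasure lebesgue (ball (fst i) (snd i)) \<partial>count_space C)"
  proof (rule nn_integral_cong)
    fix i assume "i \<in> space (count_space C)"
    then have "0 \<le> snd i"
      using C(2) by (auto simp: K_def)
    then show "emeasure lebesgue (ball (T (fst i)) (snd i)) = emeasure lebesgue (ball (fst i) (snd i))"
      by (metis emeasure_lebesgue_ball_conv_unit_ball)
  qed
  also have "\<dots> = emeasure lebesgue U"
    using emeasure_lebesgue_disjoint_balls_null[OF C(1) disjoint null(1)] U_eq by simp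
  finally show ?thesis .
qed

lemma distr_lborel_isometry: "distr lborel borel T = lborel"
proof (rule sym, rule measure_eqI_generator_eq[where E = "{S. open S}" and \<Omega> = UNIV
      and A = "\<lambda>n. ball 0 (real n)"])
  fix X :: "'a set"
  assume "X \<in> {S. open S}"
  then have "open X" "open (T -` X)"
    using continuous_on_isometry by (auto simp: continuous_on_open_vimage)
  have "emeasure lborel X = emeasure lebesgue (T ` (T -` X))"
    using \<open>open X\<close> surj by (simp add: image_vimage_eq)
  also have "\<dots> = emeasure lborel (T -` X)"
    using emeasure_isometry_image_open[OF \<open>open (T -` X)\<close>] borel_open[OF \<open>open (T -` X)\<close>]
    by simp
  also have "\<dots> = emeasure (distr lborel borel T) X"
    using \<open>open X\<close> borel_measurable_isometry by (simp add: emeasure_distr)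
  finally show "emeasure lborel X = emeasure (distr lborel borel T) X" .
next
  show "(\<Union>n. ball (0::'a) (real n)) = UNIV"
    by (auto intro: reals_Archimedean2)
  show "emeasure lborel (ball (0::'a) (real n)) \<noteq> \<infinity>" for n
    using emeasure_lborel_ball_finite[of "0::'a" "real n"] by simp
qed (auto simp: Int_stable_def sets_borel)

lemma
  shows measurable_isometry_lebesgue: "T \<in> lebesgue \<rightarrow>\<^sub>M lebesgue"
    and distr_lebesgue_isometry: "distr lebesgue lebesgue T = lebesgue"
proof -
  have T_lborel: "T \<in> lborel \<rightarrow>\<^sub>M lborel"
    using borel_measurable_isometry by simp
  then have T_lebesgue_lborel: "T \<in> lebesgue \<rightarrow>\<^sub>M lborel"
    by (rule measurable_completion)
  have "distr lebesgue lborel T = distr lborel lborel T"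
    by (rule distr_completion) (rule T_lborel)
  also have "\<dots> = lborel"
    using distr_lborel_isometry by (metis distr_cong sets_lborel)
  finally have distr: "distr lebesgue lborel T = lborel" .
  then have null: "null_sets lborel = null_sets (distr lebesgue lborel T)"
    by simp
  show "T \<in> lebesgue \<rightarrow>\<^sub>M lebesgue"
    using T_lebesgue_lborel null by (intro completion.measurable_completion2) simp_all
  have "lebesgue = completion (distr lebesgue lborel T)"
    by (simp add: distr)
  also have "\<dots> = distr lebesgue lebesgue T"
    using T_lebesgue_lborel by (subst completion.completion_distr_eq) (auto simp: null)
  finally show "distr lebesgue lebesgue T = lebesgue" ..
qed

lemma
  fixes f :: "'a \<Rightarrow> real"
  assumes "f \<in> borel_measurable lebesgue"
  shows integrable_isometry_iff: "integrable lebesgue (\<lambda>x. f (T x)) \<longleftrightarrow> integrable lebesgue f"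
    and integral_isometry: "(\<integral>x. f (T x) \<partial>lebesgue) = (\<integral>x. f x \<partial>lebesgue)"
  using integrable_distr_eq[OF measurable_isometry_lebesgue assms]
    integral_distr[OF measurable_isometry_lebesgue assms]
  by (simp_all add: distr_lebesgue_isometry)

end

definition reflection_dominated :: "'a::real_inner \<Rightarrow> real \<Rightarrow> 'a set \<Rightarrow> bool" where
  "reflection_dominated u c A \<longleftrightarrow> (\<forall>y\<in>A. c < y \<bullet> u \<longrightarrow> hyperplane_reflect u c y \<in> A)"

lemma reflection_dominated_if_subset_ball:
  fixes A :: "'a::real_inner set"
  assumes "norm u = 1" and "A \<subseteq> ball 0 r" and "r \<le> c"
  shows "reflection_dominated u c A"
proof -
  have "y \<bullet> u < c" if "y \<in> A" for y
    using norm_cauchy_schwarz[of y u] that assms by auto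
  then show ?thesis
    unfolding reflection_dominated_def by (meson less_asym)
qed

text \<open>The hyperplane is the perpendicular bisector of \<open>w\<close> and \<open>z\<close>; its distance
  \<open>(|w|\<^sup>2 - |z|\<^sup>2) / (2 |w - z|)\<close> from the origin is at least \<open>(|w| - |z|) / 2\<close>.\<close>
lemma hyperplane_reflect_bisector:
  fixes w z :: "'a::real_inner"
  assumes "w \<noteq> z" and "norm z \<le> norm w"
  obtains u c where "norm u = 1" "(norm w - norm z) / 2 \<le> c" "c < w \<bullet> u"
    "hyperplane_reflect u c w = z"
proof -
  define d where "d = norm (w - z)"
  have "d > 0"
    using assms(1) by (simp add: d_def)
  define u where "u = (1 / d) *\<^sub>R (w - z)"
  define c where "c = (w \<bullet> w - z \<bullet> z) / (2 * d)"
  have "norm u = 1"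
    using \<open>d > 0\<close> by (simp add: u_def d_def)
  have d_sq: "d\<^sup>2 = w \<bullet> w - 2 * (w \<bullet> z) + z \<bullet> z"
    by (simp add: d_def power2_norm_eq_inner inner_diff_left inner_diff_right inner_commute)
  have "w \<bullet> u - c = (2 * (w \<bullet> w - w \<bullet> z) - (w \<bullet> w - z \<bullet> z)) / (2 * d)"
    using \<open>d > 0\<close> by (simp add: u_def c_def inner_diff_right field_simps)
  also have "\<dots> = d\<^sup>2 / (2 * d)"
    by (simp add: d_sq algebra_simps)
  also have "\<dots> = d / 2"
    using \<open>d > 0\<close> by (simp add: power2_eq_square)
  finally have margin: "w \<bullet> u - c = d / 2" .
  have "hyperplane_reflect u c w = w - d *\<^sub>R u"
    by (simp add: hyperplane_reflect_def margin)
  also have "\<dots> = z"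
    using \<open>d > 0\<close> by (simp add: u_def)
  finally have "hyperplane_reflect u c w = z" .
  have "(norm w - norm z) * d \<le> (norm w - norm z) * (norm w + norm z)"
    using assms(2) norm_triangle_ineq4[of w z] by (intro mult_left_mono) (auto simp: d_def)
  also have "\<dots> = w \<bullet> w - z \<bullet> z"
    by (simp add: power2_norm_eq_inner[symmetric] power2_eq_square algebra_simps)
  finally have "(norm w - norm z) / 2 \<le> c"
    using \<open>d > 0\<close> by (simp add: c_def field_simps)
  moreover have "c < w \<bullet> u"
    using margin \<open>d > 0\<close> by linarith
  ultimately show thesis
    using that \<open>norm u = 1\<close> \<open>hyperplane_reflect u c w = z\<close> by blast
qed

lemma cball_subset_if_reflection_dominated:
  fixes A :: "'a::real_inner set"
  assumes dominated: "\<And>u c. norm u = 1 \<Longrightarrow> r \<le> c \<Longrightarrow> reflection_dominated u c A"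
    and "0 \<le> r" and "w \<in> A"
  shows "cball 0 (norm w - 2 * r) \<subseteq> A"
proof
  fix z :: 'a assume "z \<in> cball 0 (norm w - 2 * r)"
  then have z: "norm z \<le> norm w - 2 * r"
    by simp
  show "z \<in> A"
  proof (cases "z = w")
    case False
    moreover have "norm z \<le> norm w"
      using z \<open>0 \<le> r\<close> by linarith
    ultimately obtain u c where "norm u = 1" "(norm w - norm z) / 2 \<le> c" "c < w \<bullet> u"
      "hyperplane_reflect u c w = z"
      by (metis hyperplane_reflect_bisector)
    then show ?thesis
      using dominated[of u c] z \<open>w \<in> A\<close> by (auto simp: reflection_dominated_def)
  qed (use \<open>w \<in> A\<close> in simp)
qed

lemma
  fixes g :: "'a::euclidean_space \<Rightarrow> real"
  assumes "kernel_ok L g"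
  shows kernel_ok_nonneg: "0 \<le> g x"
    and kernel_ok_continuous: "continuous_on UNIV g"
    and kernel_ok_norm_antimono: "norm x \<le> norm y \<Longrightarrow> g y \<le> g x"
proof -
  have "0 \<le> g x" and g_le_1: "\<And>x. g x \<le> 1" and "g 0 = 1" and "L-lipschitz_on UNIV g"
    and "\<exists>gt. (\<forall>x. g x = gt (norm x)) \<and> (\<forall>r>0. \<exists>D. (gt has_real_derivative D) (at r) \<and> D < 0)"
    using assms unfolding kernel_ok_def by blast+
  then obtain gt where g_eq: "\<And>x. g x = gt (norm x)"
    and gt_deriv: "\<And>r. 0 < r \<Longrightarrow> \<exists>D. (gt has_real_derivative D) (at r) \<and> D < 0"
    by blast
  show "0 \<le> g x"
    by fact
  show "continuous_on UNIV g"
    using \<open>L-lipschitz_on UNIV g\<close> by (rule lipschitz_on_continuous_on)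
  assume "norm x \<le> norm y"
  then consider "x = 0" | "norm x = norm y" | "0 < norm x" "norm x < norm y"
    by (metis norm_eq_zero norm_ge_zero order.not_eq_order_implies_strict)
  then show "g y \<le> g x"
  proof cases
    case 3
    have "gt (norm y) < gt (norm x)"
    proof (rule DERIV_neg_imp_decreasing[OF 3(2)])
      fix r assume "norm x \<le> r" "r \<le> norm y"
      then show "\<exists>D. (gt has_real_derivative D) (at r) \<and> D < 0"
        using 3(1) by (intro gt_deriv) linarith
    qed
    then show ?thesis
      by (simp add: g_eq)
  qed (use g_le_1 \<open>g 0 = 1\<close> g_eq in auto)
qed

context
  fixes g :: "'a::euclidean_space \<Rightarrow> real"
  assumes g_continuous: "continuous_on UNIV g"
    and g_nonneg: "\<And>x. 0 \<le> g x"
    and g_norm_antimono: "\<And>x y. norm x \<le> norm y \<Longrightarrow> g y \<le> g x"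
begin

lemma integrable_cap_integrand:
  assumes "A \<in> sets lebesgue" and "emeasure lebesgue A < \<infinity>"
  shows "integrable lebesgue (\<lambda>y. indicator A y * g (w - y))"
proof (rule Bochner_Integration.integrable_bound)
  show "integrable lebesgue (\<lambda>y. indicator A y * g 0)"
    using assms by simp
  have "continuous_on UNIV (\<lambda>y. g (w - y))"
    by (rule continuous_on_compose2[OF g_continuous]) (auto intro: continuous_intros)
  then have "(\<lambda>y. g (w - y)) \<in> borel_measurable lborel"
    using borel_measurable_continuous_onI by simp
  then have "(\<lambda>y. g (w - y)) \<in> borel_measurable lebesgue"
    by (rule measurable_completion)
  then show "(\<lambda>y. indicator A y * g (w - y)) \<in> borel_measurable lebesgue"
    using assms(1) by (intro borel_measurable_times) simp_all
  show "AE y in lebesgue. norm (indicator A y * g (w - y)) \<le> norm (indicator A y * g 0)"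
  proof (rule AE_I2)
    fix y
    show "norm (indicator A y * g (w - y)) \<le> norm (indicator A y * g 0)"
      using g_nonneg[of "w - y"] g_norm_antimono[of 0 "w - y"] by (cases "y \<in> A") auto
  qed
qed

lemma reflection_gain_nonneg:
  assumes unit: "norm u = 1" and dominated: "reflection_dominated u c A" and w: "c < w \<bullet> u"
  shows "0 \<le> (indicator A (hyperplane_reflect u c y) - indicator A y)
    * (g (w - y) - g (hyperplane_reflect u c w - y))"
proof -
  let ?\<sigma> = "hyperplane_reflect u c"
  have sq: "(norm (?\<sigma> w - y))\<^sup>2 = (norm (w - y))\<^sup>2 + 4 * (w \<bullet> u - c) * (y \<bullet> u - c)"
    by (rule norm_hyperplane_reflect_diff_sq[OF unit])
  consider "c < y \<bullet> u" | "y \<bullet> u < c" | "y \<bullet> u = c"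
    by linarith
  then show ?thesis
  proof cases
    case 1
    then have "(norm (w - y))\<^sup>2 \<le> (norm (?\<sigma> w - y))\<^sup>2"
      using sq w by simp
    then have "norm (w - y) \<le> norm (?\<sigma> w - y)"
      by (rule power2_le_imp_le) simp
    then have "g (?\<sigma> w - y) \<le> g (w - y)"
      by (rule g_norm_antimono)
    moreover have "indicator A y \<le> (indicator A (?\<sigma> y) :: real)"
      using dominated 1 by (auto simp: reflection_dominated_def indicator_def)
    ultimately show ?thesis
      by simp
  next
    case 2
    then have "(norm (?\<sigma> w - y))\<^sup>2 \<le> (norm (w - y))\<^sup>2"
      using sq w by (simp add: mult_nonneg_nonpos)
    then have "norm (?\<sigma> w - y) \<le> norm (w - y)"
      by (rule power2_le_imp_le) simp
    then have "g (w - y) \<le> g (?\<sigma> w - y)"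
      by (rule g_norm_antimono)
    moreover have "c < ?\<sigma> y \<bullet> u"
      using 2 inner_hyperplane_reflect[OF unit] by simp
    then have "indicator A (?\<sigma> y) \<le> (indicator A y :: real)"
      using dominated unit by (auto simp: reflection_dominated_def indicator_def)
    ultimately show ?thesis
      by (simp add: mult_nonpos_nonpos)
  next
    case 3
    then show ?thesis
      by (simp add: hyperplane_reflect_def)
  qed
qed

lemma g_norm_eq: "norm x = norm y \<Longrightarrow> g x = g y"
  by (metis g_norm_antimono order.antisym order_refl)

text \<open>Symmetrization: adding to the difference of the two fields its reflected copy, which
  has the same integral, produces the integral of the nonnegative gain above.\<close>
lemma cap_field_le_reflect:
  assumes unit: "norm u = 1" and A: "A \<in> sets lebesgue" "emeasure lebesgue A < \<infinity>"
    and dominated: "reflection_dominated u c A" and w: "c < w \<bullet> u"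
  shows "cap_field g A w \<le> cap_field g A (hyperplane_reflect u c w)"
proof -
  let ?\<sigma> = "hyperplane_reflect u c"
  note field_int = integrable_cap_integrand[OF A]
  note reflect_isometry = dist_hyperplane_reflect[OF unit, of c] surj_hyperplane_reflect[OF unit, of c]
  define D where "D y = indicator A y * g (?\<sigma> w - y) - indicator A y * g (w - y)" for y
  have D_int: "integrable lebesgue D"
    unfolding D_def by (intro Bochner_Integration.integrable_diff field_int)
  then have D_meas: "D \<in> borel_measurable lebesgue"
    by (rule borel_measurable_integrable)
  have D_reflect_int: "integrable lebesgue (\<lambda>y. D (?\<sigma> y))"
    using D_int integrable_isometry_iff[OF reflect_isometry D_meas] by simp
  have "D y + D (?\<sigma> y) = (indicator A (?\<sigma> y) - indicator A y) * (g (w - y) - g (?\<sigma> w - y))" for y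
  proof -
    have "g (?\<sigma> w - ?\<sigma> y) = g (w - y)"
      using reflect_isometry(1)[of w y] by (intro g_norm_eq) (simp add: dist_norm)
    moreover have "g (w - ?\<sigma> y) = g (?\<sigma> w - y)"
      using reflect_isometry(1)[of "?\<sigma> w" y] unit by (intro g_norm_eq) (simp add: dist_norm)
    ultimately show ?thesis
      by (simp add: D_def algebra_simps)
  qed
  then have "0 \<le> (\<integral>y. D y + D (?\<sigma> y) \<partial>lebesgue)"
    using reflection_gain_nonneg[OF unit dominated w] by (intro integral_nonneg_AE) simp
  also have "\<dots> = 2 * (\<integral>y. D y \<partial>lebesgue)"
    using D_int D_reflect_int integral_isometry[OF reflect_isometry D_meas] by simp
  also have "(\<integral>y. D y \<partial>lebesgue) = cap_field g A (?\<sigma> w) - cap_field g A w"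
    unfolding D_def cap_field_def by (intro Bochner_Integration.integral_diff field_int)
  finally show ?thesis
    by simp
qed

end

lemma reflection_dominated_superlevel_cap_field:
  assumes "kernel_ok L g" and "norm u = 1"
    and "A \<in> sets lebesgue" "emeasure lebesgue A < \<infinity>" and "reflection_dominated u c A"
  shows "reflection_dominated u c {x. C \<le> cap_field g A x}"
  unfolding reflection_dominated_def
proof (intro ballI impI)
  fix y assume "y \<in> {x. C \<le> cap_field g A x}" and "c < y \<bullet> u"
  moreover have "cap_field g A y \<le> cap_field g A (hyperplane_reflect u c y)"
    using kernel_ok_continuous[OF assms(1)] kernel_ok_nonneg[OF assms(1)]
      kernel_ok_norm_antimono[OF assms(1)] assms(2-5) \<open>c < y \<bullet> u\<close>
    by (rule cap_field_le_reflect)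
  ultimately show "hyperplane_reflect u c y \<in> {x. C \<le> cap_field g A x}"
    by simp
qed

lemma reflection_dominated_cap_seq:
  assumes "kernel_ok L g" and "norm u = 1"
    and fmeasurable: "\<And>t. 1 \<le> t \<Longrightarrow> cap_seq g \<alpha> A0 t \<in> fmeasurable lebesgue"
    and "reflection_dominated u c (cap_seq g \<alpha> A0 1)" and "1 \<le> t"
  shows "reflection_dominated u c (cap_seq g \<alpha> A0 t)"
  using \<open>1 \<le> t\<close>
proof (induction t rule: dec_induct)
  case (step t)
  then have "reflection_dominated u c {x. cap_threshold g \<alpha> (cap_seq g \<alpha> A0 t)
      \<le> cap_field g (cap_seq g \<alpha> A0 t) x}"
    using fmeasurable[OF step.hyps(1)]
    by (intro reflection_dominated_superlevel_cap_field[OF assms(1,2)]) (auto simp: fmeasurable_def)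
  then show ?case
    by (simp add: cap_seq_def cap_step_def)
qed (rule assms(4))

lemma measure_ball_strict_mono:
  fixes a :: "'a::euclidean_space"
  assumes "0 \<le> r" and "r < s"
  shows "measure lebesgue (ball a r) < measure lebesgue (ball a s)"
proof -
  have "r ^ DIM('a) < s ^ DIM('a)"
    using power_strict_mono[OF assms(2,1)] by simp
  moreover have "0 < measure lborel (ball (0::'a) 1)"
    by (rule content_ball_pos) simp
  ultimately show ?thesis
    using assms content_ball_conv_unit_ball[of r a] content_ball_conv_unit_ball[of s a] by simp
qed

lemma subset_ball_if_reflection_dominated:
  fixes A :: "'a::euclidean_space set"
  assumes dominated: "\<And>u c. norm u = 1 \<Longrightarrow> r \<le> c \<Longrightarrow> reflection_dominated u c A"
    and A: "A \<in> fmeasurable lebesgue" "measure lebesgue A \<le> measure lebesgue (ball (0::'a) r)"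
    and "0 < r"
  shows "A \<subseteq> ball 0 (4 * r)"
proof
  fix w assume "w \<in> A"
  show "w \<in> ball 0 (4 * r)"
  proof (rule ccontr)
    assume "w \<notin> ball 0 (4 * r)"
    then have "ball 0 (2 * r) \<subseteq> cball 0 (norm w - 2 * r)"
      by auto
    also have "\<dots> \<subseteq> A"
      using dominated \<open>0 < r\<close> \<open>w \<in> A\<close> by (intro cball_subset_if_reflection_dominated) auto
    finally have "measure lebesgue (ball (0::'a) (2 * r)) \<le> measure lebesgue A"
      using A(1) by (intro measure_mono_fmeasurable) auto
    then show False
      using A(2) measure_ball_strict_mono[of r "2 * r" "0::'a"] \<open>0 < r\<close> by simp
  qed
qed

theorem lemma8:
  fixes g :: "'a::euclidean_space \<Rightarrow> real" and L \<alpha> R :: real and A0 :: "'a set"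
  assumes "kernel_ok L g"
    and "\<alpha> > 0" and "compact A0" and "emeasure lebesgue A0 = ennreal \<alpha>"
    and "\<forall>t\<ge>1. emeasure lebesgue (cap_seq g \<alpha> A0 t) = ennreal \<alpha>"
    and "R > 0"
    and "cap_seq g \<alpha> A0 1 \<subseteq> ball 0 (R / 4)"
  shows "\<forall>t\<ge>1. cap_seq g \<alpha> A0 t \<subseteq> ball 0 R"
proof (intro allI impI)
  (* Only A_1 enters the argument. *)
  define A where "A = cap_seq g \<alpha> A0"
  have A_fmeasurable: "A t \<in> fmeasurable lebesgue" and measure_A: "measure lebesgue (A t) = \<alpha>"
    if "1 \<le> t" for t
    using assms(2,5) that emeasure_notin_sets[of "A t" lebesgue]
    by (auto simp: A_def fmeasurable_def measure_def)
  have dominated: "reflection_dominated u c (A t)"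
    if "1 \<le> t" "norm u = 1" "R / 4 \<le> c" for t u c
    unfolding A_def
  proof (rule reflection_dominated_cap_seq[OF assms(1) that(2)])
    show "cap_seq g \<alpha> A0 s \<in> fmeasurable lebesgue" if "1 \<le> s" for s
      using A_fmeasurable[OF that] by (simp add: A_def)
    show "reflection_dominated u c (cap_seq g \<alpha> A0 1)"
      using assms(7) that(3) by (rule reflection_dominated_if_subset_ball[OF that(2)])
  qed (rule that(1))
  have "measure lebesgue (A 1) \<le> measure lebesgue (ball (0::'a) (R / 4))"
    using assms(7) A_fmeasurable[of 1] by (intro measure_mono_fmeasurable) (auto simp: A_def)
  then have "A t \<subseteq> ball 0 (4 * (R / 4))" if "1 \<le> t" for t
    using that dominated A_fmeasurable measure_A assms(6)
    by (intro subset_ball_if_reflection_dominated) auto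
  then show "cap_seq g \<alpha> A0 t \<subseteq> ball 0 R" if "1 \<le> t" for t
    using that by (simp add: A_def)
qed

end
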